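(* Let $q=2^k$ with $k\ge1$, and let $f(X)\in\mathbb{F}_q[X]$ be non-separable (i.e. $f'(X)=0$) of degree $n\ge 6$. Let $\Delta$ be the set of all $a\in\mathbb{F}_q$ for which $g_a(X):=(f(X+a)+f(a))/X$ equals $v(X)\circ D_s(X,b)$ for some $v(X)\in\mathbb{F}_q[X]$, some integer $s\ge 5$, and some $b\in\mathbb{F}_q^*$. If $|\Delta|>3$, then $f(X)=\rho(X)\circ X^6\circ\eta(X)$ for some degree-one $\rho(X),\eta(X)\in\mathbb{F}_q[X]$.
   Context: For $b\in\mathbb{F}_q$ and positive integer $s$, the Dickson polynomial $D_s(X,b)$ is the unique polynomial with $D_s(X+b/X,b)=X^s+b^s/X^s$; explicitly $D_s(X,b)=\sum_{i=0}^{\lfloor s/2\rfloor}\frac{s}{s-i}\binom{s-i}{i}(-b)^iX^{s-2i}$. *)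

theory Defs
  imports "HOL-Computational_Algebra.Polynomial"
begin

text \<open>The rational coefficient s/(s-i) * binom(s-i,i) is an integer (for s >= 1, i <= s/2);
  it is computed exactly in nat and then mapped into the ring.\<close>
definition dickson :: "nat \<Rightarrow> 'a::comm_ring_1 \<Rightarrow> 'a poly" where
  "dickson s b = (\<Sum>i\<le>s div 2.
      monom (of_nat (s * ((s - i) choose i) div (s - i)) * (- b) ^ i) (s - 2 * i))"

definition g_shift :: "'a::field poly \<Rightarrow> 'a \<Rightarrow> 'a poly" where
  "g_shift f a = (pcompose f [:a, 1:] + [:poly f a:]) div [:0, 1:]"

definition Delta_set :: "'a::field poly \<Rightarrow> 'a set" where
  "Delta_set f = {a. \<exists>v s b. s \<ge> 5 \<and> b \<noteq> 0 \<and> g_shift f a = pcompose v (dickson s b)}"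

end

theory Submission
  imports Defs
begin

text \<open>
  In characteristic 2 the condition f' = 0 says that f has only even-degree terms, so n = 2m and
  f(X + a) = sum_i f_(2i) (X^2 + a^2)^i: the coefficients of X^(n-2), X^(n-4), X^(n-6) in f(X + a)
  are polynomials in a^2 with coefficients determined by f.
  If a is in Delta, then g_a = v(D_s(X, b)) has degree n - 1 = deg v * s, so deg v and s are odd,
  and the same coefficients equal those of lc(v) D_s^(deg v), whose reversal begins
  1 + b X^2 + e b^2 X^4 + e' b^3 X^6 with e, e' in {0, 1} fixed by s mod 4.
  Comparing the two expansions according to m mod 4, either a^2 is a root of one nonzero polynomial
  of degree at most 3, and then |Delta| <= 3 because squaring is injective, or m = 3 and
  lc(f) f_2 = f_4^2, which makes f = lc(f) (X + d)^6 + c with d^2 = f_4 / lc(f).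
\<close>

section \<open>Characteristic two\<close>

lemma two_eq_zero_if_card_eq_power_two:
  assumes "k \<ge> 1" "card (UNIV :: 'a::{field,finite} set) = 2 ^ k"
  shows "(2::'a) = 0"
proof -
  let ?U = "UNIV - {0::'a}"
  have "(- 1) ^ card ?U * (\<Prod>y\<in>?U. y) = (\<Prod>y\<in>?U. - y)"
    using prod.distrib[of "\<lambda>_. - 1" "\<lambda>y. y" ?U] by simp
  also have "\<dots> = (\<Prod>y\<in>?U. y)"
    by (rule prod.reindex_bij_witness[of _ uminus uminus]) auto
  finally have "(- 1 :: 'a) ^ card ?U = 1"
    by simp
  moreover have "odd (card ?U)"
    using assms by (simp add: card_Diff_singleton)
  ultimately have "(- 1 :: 'a) = 1"
    by simp
  then show ?thesis
    by (metis add_eq_0_iff one_add_one)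
qed

lemma of_nat_char_two:
  assumes "(2::'a::comm_ring_1) = 0"
  shows "(of_nat n :: 'a) = (if even n then 0 else 1)"
proof -
  have "(of_nat n :: 'a) = 2 * of_nat (n div 2) + of_nat (n mod 2)"
    by (metis div_mult_mod_eq mult.commute of_nat_add of_nat_mult of_nat_numeral)
  then show ?thesis
    using assms by (simp add: odd_iff_mod_2_eq_one even_iff_mod_2_eq_zero)
qed

lemma minus_char_two:
  assumes "(2::'a::comm_ring_1) = 0"
  shows "- (x::'a) = x"
  using assms by (metis add_eq_0_iff mult_2 mult_zero_left)

lemma power2_add_char_two:
  assumes "(2::'a::comm_ring_1) = 0"
  shows "((x::'a) + y) ^ 2 = x ^ 2 + y ^ 2"
proof -
  have "(x + y) ^ 2 = x ^ 2 + y ^ 2 + 2 * x * y"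
    by (simp add: power2_eq_square algebra_simps)
  then show ?thesis
    using assms by simp
qed

lemma power2_inj_char_two:
  assumes "(2::'a::field) = 0" "(x::'a) ^ 2 = y ^ 2"
  shows "x = y"
proof -
  have "(x - y) ^ 2 = x ^ 2 + y ^ 2"
    using power2_add_char_two[OF assms(1), of x "- y"] by simp
  also have "\<dots> = 0"
    using assms power2_add_char_two[OF assms(1), of x x] by (simp add: mult_2[symmetric])
  finally show ?thesis
    by simp
qed

lemma coeff_odd_eq_0_if_pderiv_eq_0:
  fixes f :: "'a::idom poly"
  assumes "(2::'a) = 0" "pderiv f = 0" "odd i"
  shows "coeff f i = 0"
proof -
  obtain j where i: "i = Suc j"
    using \<open>odd i\<close> by (cases i) auto
  have "of_nat (Suc j) * coeff f (Suc j) = (0::'a)"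
    using coeff_pderiv[of f j] assms(2) by simp
  then show ?thesis
    using of_nat_char_two[OF assms(1), of i] assms(3) i by simp
qed

lemma even_degree_if_odd_coeffs_eq_0:
  assumes "f \<noteq> 0" "\<And>i. odd i \<Longrightarrow> coeff f i = 0"
  shows "even (degree f)"
  using assms leading_coeff_neq_0 by blast

lemma card_le_degree_if_squares_are_roots:
  fixes Q :: "'a::field poly"
  assumes "(2::'a) = 0" "Q \<noteq> 0" "\<And>a. a \<in> A \<Longrightarrow> poly Q (a ^ 2) = 0"
  shows "card A \<le> degree Q"
proof -
  have "inj_on (\<lambda>x::'a. x ^ 2) A"
    by (auto intro: inj_onI power2_inj_char_two[OF assms(1)])
  then have "card A = card ((\<lambda>x. x ^ 2) ` A)"
    by (simp add: card_image)
  also have "\<dots> \<le> card {y. poly Q y = 0}"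
    by (rule card_mono) (use poly_roots_finite[OF assms(2)] assms(3) in auto)
  also have "\<dots> \<le> degree Q"
    by (rule card_poly_roots_bound[OF assms(2)])
  finally show ?thesis .
qed

lemma odd_ge_5_cases:
  assumes "odd (s::nat)" "s \<ge> 5"
  obtains w where "s = 4 * w + 5" | w where "s = 4 * w + 7"
proof -
  have "\<exists>w. s = 4 * w + 5 \<or> s = 4 * w + 7"
    using assms by presburger
  then show ?thesis
    using that by blast
qed

lemma even_choose_two_iff: "even (n choose 2) \<longleftrightarrow> n mod 4 < 2"
proof (induction n)
  case (Suc n)
  have "Suc n choose 2 = n + (n choose 2)"
    by (simp add: numeral_eq_Suc)
  with Suc show ?case
    by presburger
qed (simp add: binomial_eq_0)

lemma even_choose_three_iff: "even (n choose 3) \<longleftrightarrow> n mod 4 \<noteq> 3"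
proof (induction n)
  case (Suc n)
  have "Suc n choose 3 = (n choose 2) + (n choose 3)"
    by (simp add: numeral_eq_Suc)
  with Suc even_choose_two_iff[of n] show ?case
    by presburger
qed (simp add: binomial_eq_0)

lemma odd_iff_mod_4_eq_if_mult_add_1_eq_double:
  assumes "odd t" "odd (s::nat)" "t * s + 1 = 2 * m"
  shows "odd m \<longleftrightarrow> t mod 4 = s mod 4"
proof -
  have "(t * s) mod 4 = ((t mod 4) * (s mod 4)) mod 4"
    by (simp add: mod_mult_eq)
  moreover have "t mod 4 = 1 \<or> t mod 4 = 3" "s mod 4 = 1 \<or> s mod 4 = 3"
    using assms(1,2) by presburger+
  moreover have "odd m \<longleftrightarrow> (t * s) mod 4 = 1"
    using assms(3) by presburger
  ultimately show ?thesis
    by auto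
qed

lemma low_coeffs_power:
  fixes R :: "'a::comm_ring_1 poly"
  assumes "coeff R 0 = 1" "coeff R 1 = 0" "coeff R 2 = B" "coeff R 3 = 0" "coeff R 4 = C"
    "coeff R 5 = 0" "coeff R 6 = E"
  shows "coeff (R ^ t) 0 = 1 \<and> coeff (R ^ t) 1 = 0 \<and> coeff (R ^ t) 2 = of_nat t * B \<and>
    coeff (R ^ t) 3 = 0 \<and> coeff (R ^ t) 4 = of_nat (t choose 2) * B ^ 2 + of_nat t * C \<and>
    coeff (R ^ t) 5 = 0 \<and>
    coeff (R ^ t) 6 = of_nat (t choose 3) * B ^ 3 + 2 * of_nat (t choose 2) * B * C + of_nat t * E"
proof (induction t)
  case 0
  show ?case
    by (simp add: numeral_eq_Suc)
next
  case (Suc t)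
  have "Suc t choose 2 = t + (t choose 2)" "Suc t choose 3 = (t choose 2) + (t choose 3)"
    by (simp_all add: numeral_eq_Suc)
  moreover have "coeff (R ^ Suc t) n = (\<Sum>i\<le>n. coeff R i * coeff (R ^ t) (n - i))" for n
    by (simp add: coeff_mult)
  ultimately show ?case
    using Suc.IH assms
    by (simp add: eval_nat_numeral algebra_simps power2_eq_square power3_eq_cube)
qed

lemma coeff_power_eq_coeff_reflect_power:
  fixes P :: "'a::idom poly"
  assumes "degree P = d"
  shows "coeff (P ^ r) x = (if x \<le> r * d then coeff (reflect_poly P ^ r) (r * d - x) else 0)"
proof (cases "P = 0")
  case True
  then show ?thesis
    by (cases r) (auto simp: assms[symmetric])
next
  case False
  then have "degree (P ^ r) = r * d"
    using assms by (simp add: degree_power_eq)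
  then show ?thesis
    by (auto simp: coeff_reflect_poly coeff_eq_0 simp flip: reflect_poly_power)
qed

lemma pcompose_monom: "pcompose (monom c i) q = smult c (q ^ i)"
  by (induction i) (simp_all add: monom_0 monom_Suc pcompose_pCons)

lemma coeff_pcompose_eq_sum:
  "coeff (pcompose w P) x = (\<Sum>i\<le>degree w. coeff w i * coeff (P ^ i) x)"
proof -
  have "pcompose w P = pcompose (\<Sum>i\<le>degree w. monom (coeff w i) i) P"
    by (simp add: poly_as_sum_of_monoms)
  also have "\<dots> = (\<Sum>i\<le>degree w. smult (coeff w i) (P ^ i))"
    by (simp add: pcompose_sum pcompose_monom)
  finally show ?thesis
    by (simp add: coeff_sum)
qed

section \<open>Dickson polynomials\<close>

definition dickson_coeff :: "nat \<Rightarrow> nat \<Rightarrow> nat" where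
  "dickson_coeff s i = s * ((s - i) choose i) div (s - i)"

lemma dickson_coeff_eq_choose_add:
  assumes "1 \<le> j" "j < s"
  shows "dickson_coeff s j = ((s - j) choose j) + ((s - j - 1) choose (j - 1))"
proof -
  have "j * ((s - j) choose j) = (s - j) * ((s - j - 1) choose (j - 1))"
    using times_binomial_minus1_eq[of j "s - j"] assms by simp
  moreover have "s * ((s - j) choose j) = (s - j) * ((s - j) choose j) + j * ((s - j) choose j)"
    using assms by (metis add_mult_distrib le_add_diff_inverse2 less_imp_le_nat)
  ultimately have "s * ((s - j) choose j) = (s - j) * (((s - j) choose j) + ((s - j - 1) choose (j - 1)))"
    by (simp add: algebra_simps)
  then show ?thesis
    using assms unfolding dickson_coeff_def by simp
qed

lemma even_dickson_coeff_two_iff: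
  assumes "odd s" "s \<ge> 5"
  shows "even (dickson_coeff s 2) \<longleftrightarrow> s mod 4 = 3"
proof -
  have "dickson_coeff s 2 = ((s - 2) choose 2) + (s - 3)"
    using dickson_coeff_eq_choose_add[of 2 s] assms by simp
  moreover have "even (s - 3)"
    using assms by simp
  moreover have "(s - 2) mod 4 < 2 \<longleftrightarrow> s mod 4 = 3"
    using assms by (cases rule: odd_ge_5_cases) (auto simp: mod_Suc)
  ultimately show ?thesis
    using even_choose_two_iff[of "s - 2"] by simp
qed

lemma even_dickson_coeff_three_iff:
  assumes "odd s" "s \<ge> 7"
  shows "even (dickson_coeff s 3) \<longleftrightarrow> s mod 4 = 1"
proof -
  have "dickson_coeff s 3 = ((s - 3) choose 3) + ((s - 4) choose 2)"
    using dickson_coeff_eq_choose_add[of 3 s] assms by (simp add: numeral_eq_Suc)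
  moreover have "s \<ge> 5"
    using assms(2) by simp
  with assms(1) have "((s - 3) mod 4 \<noteq> 3 \<longleftrightarrow> (s - 4) mod 4 < 2) \<longleftrightarrow> s mod 4 = 1"
    by (cases rule: odd_ge_5_cases) (use assms(2) in \<open>auto simp: mod_Suc\<close>)
  ultimately show ?thesis
    using even_choose_two_iff[of "s - 4"] even_choose_three_iff[of "s - 3"] by simp
qed

lemma coeff_dickson:
  "coeff (dickson s b) k =
     (\<Sum>i\<le>s div 2. if s - 2 * i = k then of_nat (dickson_coeff s i) * (- b) ^ i else 0)"
  unfolding dickson_def dickson_coeff_def by (simp add: coeff_sum coeff_monom)

lemma coeff_dickson_diff_double:
  assumes "j \<le> s div 2"
  shows "coeff (dickson s b) (s - 2 * j) = of_nat (dickson_coeff s j) * (- b) ^ j"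
proof -
  have "coeff (dickson s b) (s - 2 * j) =
      (\<Sum>i\<le>s div 2. if i = j then of_nat (dickson_coeff s i) * (- b) ^ i else 0)"
    unfolding coeff_dickson by (rule sum.cong) (use assms in auto)
  then show ?thesis
    using assms by simp
qed

lemma coeff_dickson_eq_0:
  assumes "\<And>i. i \<le> s div 2 \<Longrightarrow> s - 2 * i \<noteq> k"
  shows "coeff (dickson s b) k = 0"
  unfolding coeff_dickson using assms by (intro sum.neutral) auto

lemma coeff_dickson_self:
  assumes "s \<ge> 1"
  shows "coeff (dickson s b) s = 1"
  using coeff_dickson_diff_double[of 0 s b] assms by (simp add: dickson_coeff_def)

lemma degree_dickson:
  assumes "s \<ge> 1"
  shows "degree (dickson s b) = s"
proof (rule order_antisym)
  show "degree (dickson s b) \<le> s"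
    by (rule degree_le) (auto intro: coeff_dickson_eq_0)
  show "s \<le> degree (dickson s b)"
    by (rule le_degree) (simp add: coeff_dickson_self[OF assms])
qed

lemma lead_coeff_dickson: "s \<ge> 1 \<Longrightarrow> lead_coeff (dickson s b) = 1"
  by (simp add: degree_dickson coeff_dickson_self)

lemma coeff_reflect_dickson_odd:
  assumes "odd l" "l \<le> s"
  shows "coeff (reflect_poly (dickson s b)) l = 0"
proof -
  have "s \<ge> 1"
    using assms odd_pos by fastforce
  moreover have "s - 2 * i \<noteq> s - l" if "i \<le> s div 2" for i
  proof
    assume "s - 2 * i = s - l"
    moreover have "s div 2 * 2 \<le> s"
      by simp
    ultimately have "2 * i = l"
      using that assms(2) by linarith
    then show False
      using assms(1) by auto
  qed
  then have "coeff (dickson s b) (s - l) = 0"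
    by (rule coeff_dickson_eq_0)
  ultimately show ?thesis
    using assms by (simp add: coeff_reflect_poly degree_dickson)
qed

lemma coeff_reflect_dickson_char_two:
  fixes b :: "'a::comm_ring_1"
  assumes "(2::'a) = 0" "s \<ge> 5" "odd s"
  shows "coeff (reflect_poly (dickson s b)) 2 = b"
    "coeff (reflect_poly (dickson s b)) 4 = (if s mod 4 = 1 then b ^ 2 else 0)"
    "coeff (reflect_poly (dickson s b)) 6 = (if s mod 4 = 3 then b ^ 3 else 0)"
proof -
  have coeff_reflect: "coeff (reflect_poly (dickson s b)) (2 * j) =
      (if 2 * j \<le> s then of_nat (dickson_coeff s j) * b ^ j else 0)" for j
    using assms coeff_dickson_diff_double[of j s b]
    by (simp add: coeff_reflect_poly degree_dickson minus_char_two[OF assms(1)])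
  note of_nat = of_nat_char_two[OF assms(1)]
  have mod_4: "s mod 4 = 1 \<or> s mod 4 = 3"
    using assms(3) by presburger
  show "coeff (reflect_poly (dickson s b)) 2 = b"
    using coeff_reflect[of 1] assms by (simp add: dickson_coeff_def of_nat)
  show "coeff (reflect_poly (dickson s b)) 4 = (if s mod 4 = 1 then b ^ 2 else 0)"
    using coeff_reflect[of 2] assms mod_4 even_dickson_coeff_two_iff[of s]
    by (auto simp: of_nat[of "dickson_coeff s 2"])
  show "coeff (reflect_poly (dickson s b)) 6 = (if s mod 4 = 3 then b ^ 3 else 0)"
  proof (cases "s = 5")
    case False
    with assms(2,3) have "s \<ge> 7"
      by (cases "s = 6") auto
    then show ?thesis
      using coeff_reflect[of 3] assms mod_4 even_dickson_coeff_three_iff[of s]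
      by (auto simp: of_nat[of "dickson_coeff s 3"])
  qed (use coeff_reflect[of 3] in simp)
qed

lemma low_coeffs_power_reflect_dickson:
  fixes b :: "'a::comm_ring_1"
  assumes "s \<ge> 5"
  defines "R \<equiv> reflect_poly (dickson s b)"
  shows "coeff (R ^ t) 0 = 1 \<and> coeff (R ^ t) 1 = 0 \<and>
    coeff (R ^ t) 2 = of_nat t * coeff R 2 \<and>
    coeff (R ^ t) 4 = of_nat (t choose 2) * coeff R 2 ^ 2 + of_nat t * coeff R 4 \<and>
    coeff (R ^ t) 6 = of_nat (t choose 3) * coeff R 2 ^ 3
      + 2 * of_nat (t choose 2) * coeff R 2 * coeff R 4 + of_nat t * coeff R 6"
  using low_coeffs_power[of R "coeff R 2" "coeff R 4" "coeff R 6" t] assms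
  by (simp add: lead_coeff_dickson coeff_reflect_dickson_odd)

lemma coeff_dickson_power_below_top:
  fixes b :: "'a::idom"
  assumes "s \<ge> 5" "odd s" "i < t" "even j" "j \<le> 6" "j \<le> t * s"
  shows "coeff (dickson s b ^ i) (t * s - j) = 0"
proof (cases "t * s - j \<le> i * s")
  case True
  txt \<open>Reaching down to degree t s - j forces (t - i) s \<le> j \<le> 6, hence s = 5, i = t - 1, j = 6,
    and the coefficient is the one of X^1 in the reversal of D_5^i, which vanishes.\<close>
  define d where "d = t - i"
  have "t * s = i * s + d * s"
    using assms(3) by (simp add: d_def flip: add_mult_distrib)
  moreover have "d \<ge> 1"
    using assms(3) by (simp add: d_def)
  ultimately have "d * s \<le> j" "s \<le> d * s"
    using True assms(6) by simp_all
  moreover have "d \<le> 1"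
  proof (rule ccontr)
    assume "\<not> d \<le> 1"
    then have "2 * 5 \<le> d * s"
      using assms(1) by (intro mult_le_mono) auto
    then show False
      using \<open>d * s \<le> j\<close> assms(5) by linarith
  qed
  moreover have "s \<noteq> 6" "j \<noteq> 5"
    using assms(2,4) by auto
  ultimately have "d = 1" "s = 5" "j = 6"
    using \<open>d \<ge> 1\<close> assms(1,5) by linarith+
  then have "i * s - (t * s - j) = 1"
    using \<open>t * s = i * s + d * s\<close> assms(6) by (simp; linarith)
  then show ?thesis
    using True coeff_power_eq_coeff_reflect_power[OF degree_dickson, of s b i "t * s - j"]
      low_coeffs_power_reflect_dickson[OF assms(1), of b i] assms(1) by simp
next
  case False
  then show ?thesis
    using coeff_power_eq_coeff_reflect_power[OF degree_dickson, of s b i] assms(1) by simp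
qed

lemma coeff_pcompose_dickson_top:
  fixes b :: "'a::idom"
  assumes "s \<ge> 5" "odd s" "even j" "j \<le> 6" "j \<le> degree v * s"
  shows "coeff (pcompose v (dickson s b)) (degree v * s - j) =
    lead_coeff v * coeff (reflect_poly (dickson s b) ^ degree v) j"
proof -
  let ?t = "degree v"
  have below_top: "(\<Sum>i<?t. coeff v i * coeff (dickson s b ^ i) (?t * s - j)) = 0"
    by (rule sum.neutral) (simp add: coeff_dickson_power_below_top[OF assms(1,2) _ assms(3-5)])
  have "coeff (pcompose v (dickson s b)) (?t * s - j) =
      (\<Sum>i\<le>?t. coeff v i * coeff (dickson s b ^ i) (?t * s - j))"
    by (rule coeff_pcompose_eq_sum)
  also have "\<dots> = lead_coeff v * coeff (dickson s b ^ ?t) (?t * s - j)"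
    using below_top by (simp add: lessThan_Suc_atMost[symmetric])
  also have "\<dots> = lead_coeff v * coeff (reflect_poly (dickson s b) ^ ?t) j"
    using coeff_power_eq_coeff_reflect_power[OF degree_dickson, of s b ?t "?t * s - j"] assms
    by (simp add: diff_diff_cancel)
  finally show ?thesis .
qed

section \<open>Shifts of polynomials in X^2\<close>

lemma coeff_power_even_quadratic:
  fixes c :: "'a::comm_ring_1"
  shows "coeff ([:c, 0, 1:] ^ i) (2 * k) = of_nat (i choose k) * c ^ (i - k)"
proof -
  have "[:c, 0, 1:] = monom 1 2 + [:c:]"
    by (simp add: monom_altdef power2_eq_square)
  then have "[:c, 0, 1:] ^ i = (\<Sum>j\<le>i. of_nat (i choose j) * monom 1 2 ^ j * [:c:] ^ (i - j))"
    by (simp add: binomial_ring)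
  also have "\<dots> = (\<Sum>j\<le>i. monom (of_nat (i choose j) * c ^ (i - j)) (2 * j))"
    by (simp add: monom_power poly_const_pow of_nat_poly mult.commute smult_monom
        flip: smult_monom_mult)
  finally have "coeff ([:c, 0, 1:] ^ i) (2 * k) =
      (\<Sum>j\<le>i. if j = k then of_nat (i choose j) * c ^ (i - j) else 0)"
    by (simp add: coeff_sum coeff_monom)
  then show ?thesis
    by (simp add: binomial_eq_0)
qed

lemma poly_eq_sum_even_monoms:
  fixes f :: "'a::comm_ring_1 poly"
  assumes "\<And>i. odd i \<Longrightarrow> coeff f i = 0" "degree f = 2 * m"
  shows "f = (\<Sum>i\<le>m. monom (coeff f (2 * i)) (2 * i))"
proof (rule poly_eqI)
  fix k
  show "coeff f k = coeff (\<Sum>i\<le>m. monom (coeff f (2 * i)) (2 * i)) k"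
  proof (cases "even k")
    case True
    then obtain q where "k = 2 * q"
      by blast
    then show ?thesis
      using assms(2) by (auto simp: coeff_sum coeff_monom coeff_eq_0)
  next
    case False
    then show ?thesis
      using assms(1) by (auto simp: coeff_sum coeff_monom intro!: sum.neutral)
  qed
qed

lemma linear_power_double_char_two:
  fixes a :: "'a::comm_ring_1"
  assumes "(2::'a) = 0"
  shows "[:a, 1:] ^ (2 * i) = [:a ^ 2, 0, 1:] ^ i"
proof -
  have "[:a, 1:] ^ 2 = [:a ^ 2, 2 * a, 1:]"
    by (simp add: power2_eq_square algebra_simps)
  then show ?thesis
    using assms by (simp add: power_mult)
qed

lemma coeff_shift_even_poly:
  fixes f :: "'a::comm_ring_1 poly"
  assumes "(2::'a) = 0" "\<And>i. odd i \<Longrightarrow> coeff f i = 0" "degree f = 2 * m" "J \<le> m"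
  shows "coeff (pcompose f [:a, 1:]) (2 * m - 2 * J) =
    (\<Sum>l\<le>J. coeff f (2 * (m - l)) * of_nat ((m - l) choose (J - l)) * a ^ (2 * (J - l)))"
proof -
  let ?term = "\<lambda>i. coeff f (2 * i) * of_nat (i choose (m - J)) * (a ^ 2) ^ (i - (m - J))"
  have "pcompose f [:a, 1:] = pcompose (\<Sum>i\<le>m. monom (coeff f (2 * i)) (2 * i)) [:a, 1:]"
    using poly_eq_sum_even_monoms[OF assms(2,3)] by (rule arg_cong)
  also have "\<dots> = (\<Sum>i\<le>m. smult (coeff f (2 * i)) ([:a, 1:] ^ (2 * i)))"
    by (simp add: pcompose_sum pcompose_monom)
  also have "\<dots> = (\<Sum>i\<le>m. smult (coeff f (2 * i)) ([:a ^ 2, 0, 1:] ^ i))"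
    by (simp only: linear_power_double_char_two[OF assms(1)])
  finally have "coeff (pcompose f [:a, 1:]) (2 * (m - J)) = (\<Sum>i\<le>m. ?term i)"
    by (simp add: coeff_sum coeff_power_even_quadratic mult.assoc)
  also have "\<dots> = (\<Sum>i\<in>{m - J..m}. ?term i)"
    by (rule sum.mono_neutral_right) (auto simp: binomial_eq_0)
  also have "\<dots> = (\<Sum>l\<le>J. ?term (m - l))"
    by (rule sum.reindex_bij_witness[of _ "\<lambda>i. m - i" "\<lambda>l. m - l"]) (use assms(4) in auto)
  also have "\<dots> = (\<Sum>l\<le>J. coeff f (2 * (m - l)) * of_nat ((m - l) choose (J - l)) * a ^ (2 * (J - l)))"
  proof (rule sum.cong)
    fix l
    assume "l \<in> {..J}"
    then have "m - l - (m - J) = J - l"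
      using assms(4) by auto
    moreover have "(m - l) choose (m - J) = (m - l) choose (m - l - (m - J))"
      using \<open>l \<in> {..J}\<close> by (intro binomial_symmetric) auto
    ultimately show "?term (m - l) = coeff f (2 * (m - l)) * of_nat ((m - l) choose (J - l)) * a ^ (2 * (J - l))"
      by (simp add: power_mult)
  qed simp
  finally show ?thesis
    by (simp add: right_diff_distrib')
qed

section \<open>The set Delta\<close>

lemma coeff_div_X: "coeff (p div [:0, 1:]) k = coeff p (Suc k)"
  for p :: "'a::field poly"
proof -
  obtain c q where p: "p = pCons c q"
    by (cases p) auto
  have "p div [:0, 1:] = ([:c:] + [:0, 1:] * q) div [:0, 1:]"
    by (simp add: p)
  also have "\<dots> = q + [:c:] div [:0, 1:]"
    by (rule div_mult_self2) simp
  also have "[:c:] div [:0, 1:] = 0"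
    by (rule div_poly_less) simp
  finally show ?thesis
    using p by simp
qed

lemma coeff_g_shift: "coeff (g_shift f a) k = coeff (pcompose f [:a, 1:]) (Suc k)"
  unfolding g_shift_def by (simp add: coeff_div_X)

context
  fixes f :: "'a::field poly" and m :: nat
  assumes char_two: "(2::'a) = 0"
    and coeff_odd: "\<And>i. odd i \<Longrightarrow> coeff f i = 0"
    and degree_f: "degree f = 2 * m"
    and three_le_m: "m \<ge> 3"
begin

lemma top_coeffs_shift:
  "coeff (pcompose f [:a, 1:]) (2 * m - 2) = lead_coeff f * of_nat m * a ^ 2 + coeff f (2 * m - 2)"
  "coeff (pcompose f [:a, 1:]) (2 * m - 4) = lead_coeff f * of_nat (m choose 2) * a ^ 4
     + coeff f (2 * m - 2) * of_nat (m - 1) * a ^ 2 + coeff f (2 * m - 4)"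
  "coeff (pcompose f [:a, 1:]) (2 * m - 6) = lead_coeff f * of_nat (m choose 3) * a ^ 6
     + coeff f (2 * m - 2) * of_nat ((m - 1) choose 2) * a ^ 4
     + coeff f (2 * m - 4) * of_nat (m - 2) * a ^ 2 + coeff f (2 * m - 6)"
proof -
  note shift = coeff_shift_even_poly[OF char_two coeff_odd degree_f, of _ a]
  have index: "2 * (m - Suc 0) = 2 * m - 2" "2 * (m - 2) = 2 * m - 4" "2 * (m - 3) = 2 * m - 6"
    by auto
  have lead: "coeff f (2 * m) = lead_coeff f"
    using degree_f by simp
  have sum_expand: "(\<Sum>l\<le>2. g l) = g 0 + g 1 + g 2" "(\<Sum>l\<le>3. g l) = g 0 + g 1 + g 2 + g 3"
    for g :: "nat \<Rightarrow> 'a"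
    by (simp_all add: eval_nat_numeral)
  show "coeff (pcompose f [:a, 1:]) (2 * m - 2) = lead_coeff f * of_nat m * a ^ 2 + coeff f (2 * m - 2)"
    using shift[of 1] three_le_m by (simp add: index lead)
  show "coeff (pcompose f [:a, 1:]) (2 * m - 4) = lead_coeff f * of_nat (m choose 2) * a ^ 4
     + coeff f (2 * m - 2) * of_nat (m - 1) * a ^ 2 + coeff f (2 * m - 4)"
    using shift[of 2] three_le_m by (simp add: index lead sum_expand)
  show "coeff (pcompose f [:a, 1:]) (2 * m - 6) = lead_coeff f * of_nat (m choose 3) * a ^ 6
     + coeff f (2 * m - 2) * of_nat ((m - 1) choose 2) * a ^ 4
     + coeff f (2 * m - 4) * of_nat (m - 2) * a ^ 2 + coeff f (2 * m - 6)"
    using shift[of 3] three_le_m by (simp add: index lead sum_expand)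
qed

lemma lead_coeff_f_neq_0: "lead_coeff f \<noteq> 0"
proof -
  have "f \<noteq> 0"
    using degree_f three_le_m by auto
  then show ?thesis
    by (rule leading_coeff_neq_0)
qed

lemma Delta_set_top_coeffs:
  assumes "a \<in> Delta_set f"
  obtains t s b where "odd t" "odd s" "s \<ge> 5" "b \<noteq> 0" "t * s + 1 = 2 * m"
    "\<And>j. even j \<Longrightarrow> j \<le> 6 \<Longrightarrow> j \<le> t * s \<Longrightarrow> coeff (pcompose f [:a, 1:]) (2 * m - j) =
      lead_coeff f * coeff (reflect_poly (dickson s b) ^ t) j"
proof -
  obtain v s b where "s \<ge> 5" "b \<noteq> 0" and g: "g_shift f a = pcompose v (dickson s b)"
    using assms by (auto simp: Delta_set_def)
  let ?t = "degree v"
  have coeff_comp: "coeff (pcompose v (dickson s b)) k = coeff (pcompose f [:a, 1:]) (Suc k)" for k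
    using coeff_g_shift[of f a k] g by simp
  have degree_shift: "degree (pcompose f [:a, 1:]) = 2 * m"
    using degree_f by (simp add: degree_pcompose)
  have lead_shift: "coeff (pcompose f [:a, 1:]) (2 * m) = lead_coeff f"
    using lead_coeff_comp[of "[:a, 1:]" f] degree_shift by simp
  have "degree (pcompose v (dickson s b)) = 2 * m - 1"
  proof (rule order_antisym)
    show "degree (pcompose v (dickson s b)) \<le> 2 * m - 1"
      by (rule degree_le) (use coeff_comp degree_shift in \<open>auto simp: coeff_eq_0\<close>)
    show "2 * m - 1 \<le> degree (pcompose v (dickson s b))"
      by (rule le_degree) (use coeff_comp lead_shift lead_coeff_f_neq_0 three_le_m in simp)
  qed
  then have ts: "?t * s + 1 = 2 * m"
    using \<open>s \<ge> 5\<close> three_le_m by (simp add: degree_pcompose degree_dickson)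
  then have "odd ?t" "odd s"
    by (metis even_add even_mult_iff odd_one dvd_triv_left)+
  have top: "coeff (pcompose f [:a, 1:]) (2 * m - j) =
      lead_coeff v * coeff (reflect_poly (dickson s b) ^ ?t) j"
    if "even j" "j \<le> 6" "j \<le> ?t * s" for j
  proof -
    have "Suc (?t * s - j) = 2 * m - j"
      using that ts by linarith
    then show ?thesis
      using coeff_comp[of "?t * s - j"] coeff_pcompose_dickson_top[OF \<open>s \<ge> 5\<close> \<open>odd s\<close> that]
      by simp
  qed
  moreover have "lead_coeff v = lead_coeff f"
    using top[of 0] lead_shift low_coeffs_power_reflect_dickson[OF \<open>s \<ge> 5\<close>, of b ?t] by simp
  ultimately show ?thesis
    using that \<open>odd ?t\<close> \<open>odd s\<close> \<open>s \<ge> 5\<close> \<open>b \<noteq> 0\<close> ts by simp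
qed

lemma Delta_set_shift_coeffs:
  assumes "a \<in> Delta_set f"
  shows "coeff (pcompose f [:a, 1:]) (2 * m - 2) \<noteq> 0"
    and "odd m \<Longrightarrow> lead_coeff f * coeff (pcompose f [:a, 1:]) (2 * m - 4) =
      coeff (pcompose f [:a, 1:]) (2 * m - 2) ^ 2"
    and "even m \<Longrightarrow> coeff (pcompose f [:a, 1:]) (2 * m - 4) = 0"
    and "odd m \<Longrightarrow> m \<ge> 4 \<Longrightarrow> coeff (pcompose f [:a, 1:]) (2 * m - 6) = 0"
proof -
  let ?F = "\<lambda>j. coeff (pcompose f [:a, 1:]) (2 * m - j)"
  let ?L = "lead_coeff f"
  obtain t s b where "odd t" "odd s" "s \<ge> 5" "b \<noteq> 0" and ts: "t * s + 1 = 2 * m"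
    and top: "\<And>j. even j \<Longrightarrow> j \<le> 6 \<Longrightarrow> j \<le> t * s \<Longrightarrow>
      ?F j = ?L * coeff (reflect_poly (dickson s b) ^ t) j"
    using Delta_set_top_coeffs[OF assms] by blast
  note power = low_coeffs_power_reflect_dickson[OF \<open>s \<ge> 5\<close>, of b t]
  note reflect = coeff_reflect_dickson_char_two[OF char_two \<open>s \<ge> 5\<close> \<open>odd s\<close>, of b]
  note of_nat = of_nat_char_two[OF char_two]
  have t_mod_4: "t mod 4 = 1 \<or> t mod 4 = 3" and s_mod_4: "s mod 4 = 1 \<or> s mod 4 = 3"
    using \<open>odd t\<close> \<open>odd s\<close> by presburger+
  have choose_2: "(of_nat (t choose 2) :: 'a) = (if t mod 4 = 3 then 1 else 0)"
    using of_nat[of "t choose 2"] even_choose_two_iff[of t] t_mod_4 by auto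
  have choose_3: "(of_nat (t choose 3) :: 'a) = (if t mod 4 = 3 then 1 else 0)"
    using of_nat[of "t choose 3"] even_choose_three_iff[of t] t_mod_4 by auto
  have odd_m: "odd m \<longleftrightarrow> t mod 4 = s mod 4"
    by (rule odd_iff_mod_4_eq_if_mult_add_1_eq_double[OF \<open>odd t\<close> \<open>odd s\<close> ts])
  have "t * s \<ge> 5"
    using ts three_le_m by simp
  have F2: "?F 2 = ?L * b"
    using top[of 2] power reflect \<open>t * s \<ge> 5\<close> of_nat[of t] \<open>odd t\<close> by simp
  then show "?F 2 \<noteq> 0"
    using lead_coeff_f_neq_0 \<open>b \<noteq> 0\<close> by simp
  have F4: "?F 4 = ?L * (of_nat (t choose 2) * b ^ 2 + (if s mod 4 = 1 then b ^ 2 else 0))"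
    using top[of 4] power reflect \<open>t * s \<ge> 5\<close> of_nat[of t] \<open>odd t\<close> by simp
  have double: "b ^ 2 + b ^ 2 = 0" "b ^ 3 + b ^ 3 = 0"
    using char_two by (metis mult_2 mult_zero_left)+
  show "odd m \<Longrightarrow> ?L * ?F 4 = ?F 2 ^ 2"
    using F4 F2 choose_2 odd_m t_mod_4 s_mod_4 by (auto simp: power2_eq_square algebra_simps)
  show "even m \<Longrightarrow> ?F 4 = 0"
    using F4 choose_2 odd_m t_mod_4 s_mod_4 double by auto
  assume "odd m" "m \<ge> 4"
  then have "?F 6 = ?L * (of_nat (t choose 3) * b ^ 3 + (if s mod 4 = 3 then b ^ 3 else 0))"
    using top[of 6] power reflect ts of_nat[of t] \<open>odd t\<close> char_two by simp
  then show "?F 6 = 0"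
    using choose_3 odd_m \<open>odd m\<close> t_mod_4 s_mod_4 double by auto
qed

lemma Delta_set_odd_relation:
  assumes "a \<in> Delta_set f" "odd m"
  shows "lead_coeff f * (lead_coeff f * of_nat (m choose 2) * a ^ 4 + coeff f (2 * m - 4)) =
    lead_coeff f * lead_coeff f * a ^ 4 + coeff f (2 * m - 2) ^ 2"
proof -
  let ?L = "lead_coeff f"
  have "of_nat m = (1::'a)" "of_nat (m - 1) = (0::'a)"
    using of_nat_char_two[OF char_two] assms(2) three_le_m by auto
  then have "?L * (?L * of_nat (m choose 2) * a ^ 4 + coeff f (2 * m - 4)) =
      (?L * a ^ 2 + coeff f (2 * m - 2)) ^ 2"
    using Delta_set_shift_coeffs(2)[OF assms] top_coeffs_shift[of a] by simp
  also have "\<dots> = (?L * a ^ 2) ^ 2 + coeff f (2 * m - 2) ^ 2"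
    by (rule power2_add_char_two[OF char_two])
  also have "(?L * a ^ 2) ^ 2 = ?L * ?L * a ^ 4"
    by (simp add: power2_eq_square eval_nat_numeral)
  finally show ?thesis .
qed

lemma card_Delta_set_le_2_if_even:
  assumes "even m"
  shows "card (Delta_set f) \<le> 2"
proof (cases "Delta_set f = {}")
  case False
  then obtain a0 where "a0 \<in> Delta_set f"
    by blast
  have "of_nat m = (0::'a)" "of_nat (m - 1) = (1::'a)"
    using of_nat_char_two[OF char_two] assms three_le_m by auto
  define Q where "Q = [:coeff f (2 * m - 4), coeff f (2 * m - 2), lead_coeff f * of_nat (m choose 2):]"
  have "coeff f (2 * m - 2) \<noteq> 0"
    using Delta_set_shift_coeffs(1)[OF \<open>a0 \<in> Delta_set f\<close>] top_coeffs_shift(1)[of a0]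
      \<open>of_nat m = 0\<close> by simp
  then have "Q \<noteq> 0"
    by (simp add: Q_def)
  moreover have "poly Q (a ^ 2) = 0" if "a \<in> Delta_set f" for a
    using Delta_set_shift_coeffs(3)[OF that assms] top_coeffs_shift(2)[of a] \<open>of_nat (m - 1) = 1\<close>
    by (simp add: Q_def algebra_simps flip: power_mult)
  ultimately have "card (Delta_set f) \<le> degree Q"
    by (rule card_le_degree_if_squares_are_roots[OF char_two])
  also have "degree Q \<le> 2"
    by (simp add: Q_def)
  finally show ?thesis .
qed simp

lemma card_Delta_set_le_2_if_mod_4_eq_1:
  assumes "m mod 4 = 1"
  shows "card (Delta_set f) \<le> 2"
proof -
  let ?L = "lead_coeff f"
  define Q where "Q = [:coeff f (2 * m - 2) ^ 2 - ?L * coeff f (2 * m - 4), 0, ?L * ?L:]"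
  have "Q \<noteq> 0"
    using lead_coeff_f_neq_0 by (simp add: Q_def)
  moreover have "poly Q (a ^ 2) = 0" if "a \<in> Delta_set f" for a
  proof -
    have "odd m"
      using assms by presburger
    moreover have "(of_nat (m choose 2) :: 'a) = 0"
      using of_nat_char_two[OF char_two] even_choose_two_iff[of m] assms by simp
    ultimately show ?thesis
      using Delta_set_odd_relation[OF that] by (simp add: Q_def algebra_simps flip: power_mult)
  qed
  ultimately have "card (Delta_set f) \<le> degree Q"
    by (rule card_le_degree_if_squares_are_roots[OF char_two])
  also have "degree Q \<le> 2"
    by (simp add: Q_def)
  finally show ?thesis .
qed

lemma Delta_set_coeff_relation_if_mod_4_eq_3:
  assumes "a \<in> Delta_set f" "m mod 4 = 3"
  shows "lead_coeff f * coeff f (2 * m - 4) = coeff f (2 * m - 2) ^ 2"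
proof -
  have "odd m"
    using assms(2) by presburger
  moreover have "(of_nat (m choose 2) :: 'a) = 1"
    using of_nat_char_two[OF char_two] even_choose_two_iff[of m] assms(2) by simp
  ultimately show ?thesis
    using Delta_set_odd_relation[OF assms(1)] by (simp add: algebra_simps)
qed

lemma card_Delta_set_le_3_if_mod_4_eq_3:
  assumes "m mod 4 = 3" "m \<ge> 4"
  shows "card (Delta_set f) \<le> 3"
proof -
  define Q where "Q = [:coeff f (2 * m - 6), coeff f (2 * m - 4) * of_nat (m - 2),
    coeff f (2 * m - 2) * of_nat ((m - 1) choose 2), lead_coeff f:]"
  have "Q \<noteq> 0"
    using lead_coeff_f_neq_0 by (simp add: Q_def)
  moreover have "poly Q (a ^ 2) = 0" if "a \<in> Delta_set f" for a
  proof -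
    have "odd m"
      using assms(1) by presburger
    moreover have "(of_nat (m choose 3) :: 'a) = 1"
      using of_nat_char_two[OF char_two] even_choose_three_iff[of m] assms(1) by simp
    ultimately show ?thesis
      using Delta_set_shift_coeffs(4)[OF that _ assms(2)] top_coeffs_shift(3)[of a]
      by (simp add: Q_def algebra_simps flip: power_mult)
  qed
  ultimately have "card (Delta_set f) \<le> degree Q"
    by (rule card_le_degree_if_squares_are_roots[OF char_two])
  also have "degree Q \<le> 3"
    by (simp add: Q_def)
  finally show ?thesis .
qed

lemma card_Delta_set_le_3_if_neq_3:
  assumes "m \<noteq> 3"
  shows "card (Delta_set f) \<le> 3"
proof -
  have "even m \<or> m mod 4 = 1 \<or> m mod 4 = 3"
    by presburger
  then show ?thesis
  proof (elim disjE)
    assume "even m"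
    then show ?thesis
      using card_Delta_set_le_2_if_even by simp
  next
    assume "m mod 4 = 1"
    then show ?thesis
      using card_Delta_set_le_2_if_mod_4_eq_1 by simp
  next
    assume "m mod 4 = 3"
    moreover have "m \<ge> 4"
      using assms three_le_m by simp
    ultimately show ?thesis
      by (rule card_Delta_set_le_3_if_mod_4_eq_3)
  qed
qed

end

lemma sextic_eq_pcompose_sixth_power:
  fixes f :: "'a::{field,finite} poly"
  assumes char_two: "(2::'a) = 0" and "\<And>i. odd i \<Longrightarrow> coeff f i = 0"
    and "degree f = 6" and "lead_coeff f * coeff f 2 = coeff f 4 ^ 2"
  shows "\<exists>\<rho> \<eta>. degree \<rho> = 1 \<and> degree \<eta> = 1 \<and> f = pcompose \<rho> (pcompose (monom 1 6) \<eta>)"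
proof -
  let ?L = "lead_coeff f"
  have "f \<noteq> 0"
    using assms(3) by (metis degree_0 zero_neq_numeral)
  then have "?L \<noteq> 0"
    by (rule leading_coeff_neq_0)
  have "inj (\<lambda>x::'a. x ^ 2)"
    by (rule injI) (rule power2_inj_char_two[OF char_two])
  then have "surj (\<lambda>x::'a. x ^ 2)"
    by (rule finite_UNIV_inj_surj[OF finite_UNIV])
  then obtain d where "coeff f 4 / ?L = d ^ 2"
    using surjD[of "\<lambda>x::'a. x ^ 2" "coeff f 4 / ?L"] by blast
  then have f4: "coeff f 4 = ?L * d ^ 2"
    using \<open>?L \<noteq> 0\<close> by (simp add: field_simps)
  have "?L * coeff f 2 = (?L * d ^ 2) ^ 2"
    using assms(4) f4 by simp
  also have "\<dots> = ?L * (?L * d ^ 4)"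
    by (simp add: power_mult_distrib power2_eq_square eval_nat_numeral)
  finally have f2: "coeff f 2 = ?L * d ^ 4"
    using \<open>?L \<noteq> 0\<close> by simp
  have f_eq: "f = [:coeff f 0, 0, ?L * d ^ 4, 0, ?L * d ^ 2, 0, ?L:]"
  proof (rule poly_eqI)
    have odd_coeffs: "coeff f 1 = 0" "coeff f 3 = 0" "coeff f 5 = 0"
      using assms(2) by simp_all
    fix k :: nat
    consider "k \<le> 6" | "k > 6"
      by linarith
    then show "coeff f k = coeff [:coeff f 0, 0, ?L * d ^ 4, 0, ?L * d ^ 2, 0, ?L:] k"
    proof cases
      case 1
      then have "k \<in> {0, 1, 2, 3, 4, 5, 6}"
        by auto
      then show ?thesis
        using odd_coeffs assms(3) f2 f4 by (auto simp: eval_nat_numeral)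
    qed (use assms(3) in \<open>auto simp: coeff_eq_0 coeff_pCons split: nat.split\<close>)
  qed
  have "[:d ^ 2, 0, 1:] ^ 3 = [:d ^ 6, 0, d ^ 4, 0, d ^ 2, 0, 1:]"
    using char_two by (simp add: power3_eq_cube power2_eq_square eval_nat_numeral algebra_simps)
  then have sixth: "pcompose (monom 1 6) [:d, 1:] = [:d ^ 6, 0, d ^ 4, 0, d ^ 2, 0, 1:]"
    using linear_power_double_char_two[OF char_two, of d 3] by (simp add: pcompose_monom)
  define c where "c = coeff f 0 + ?L * d ^ 6"
  have "?L * d ^ 6 + ?L * d ^ 6 = 0"
    using char_two by (metis mult_2 mult_zero_left)
  then have "pcompose [:c, ?L:] (pcompose (monom 1 6) [:d, 1:]) =
      [:coeff f 0, 0, ?L * d ^ 4, 0, ?L * d ^ 2, 0, ?L:]"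
    by (simp add: sixth c_def pcompose_pCons algebra_simps)
  then have "f = pcompose [:c, ?L:] (pcompose (monom 1 6) [:d, 1:])"
    using f_eq by (rule ssubst)
  moreover have "degree [:c, ?L:] = 1" "degree [:d, 1::'a:] = 1"
    using \<open>?L \<noteq> 0\<close> by simp_all
  ultimately show ?thesis
    by metis
qed

theorem lemma3p3:
  fixes f :: "'a::{field,finite} poly" and k :: nat
  assumes "k \<ge> 1" and "card (UNIV :: 'a set) = 2 ^ k"
    and "pderiv f = 0"
    and "degree f \<ge> 6"
    and "card (Delta_set f) > 3"
  shows "\<exists>\<rho> \<eta>. degree \<rho> = 1 \<and> degree \<eta> = 1 \<and>
           f = pcompose \<rho> (pcompose (monom 1 6) \<eta>)"
proof -
  have char_two: "(2::'a) = 0"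
    using two_eq_zero_if_card_eq_power_two[OF assms(1,2)] .
  have coeff_odd: "coeff f i = 0" if "odd i" for i
    using coeff_odd_eq_0_if_pderiv_eq_0[OF char_two assms(3) that] .
  have "f \<noteq> 0"
    using assms(4) by auto
  then obtain m where degree_f: "degree f = 2 * m"
    using even_degree_if_odd_coeffs_eq_0 coeff_odd by blast
  with assms(4) have "m \<ge> 3"
    by simp
  note setting = char_two coeff_odd degree_f \<open>m \<ge> 3\<close>
  have "m = 3"
    using card_Delta_set_le_3_if_neq_3[OF setting] assms(5) by fastforce
  obtain a where "a \<in> Delta_set f"
    using assms(5) by (metis card.empty ex_in_conv not_less_zero)
  then have "lead_coeff f * coeff f 2 = coeff f 4 ^ 2"
    using Delta_set_coeff_relation_if_mod_4_eq_3[OF setting] \<open>m = 3\<close> by simp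
  then show ?thesis
    using sextic_eq_pcompose_sixth_power[OF char_two coeff_odd] degree_f \<open>m = 3\<close> by simp
qed

end
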